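(* Let $\mathscr{H}_3$ be the class of graphs $G$ on at least twelve vertices with $\gamma(G)=2$ and $\operatorname{diam}(\overline{G})\ge 3$. Then $\mathscr{H}_3$ is recognizable: every graph $H$ with $\mathscr{D}(H)=\mathscr{D}(G)$ for some $G\in\mathscr{H}_3$ belongs to $\mathscr{H}_3$.
   Context: All graphs are finite, simple and undirected; $\overline{G}$ is the complement, $\operatorname{diam}$ the diameter (infinite for disconnected graphs) and $\gamma$ the domination number. For a vertex $v$, the card $G-v$ is the unlabeled graph obtained by deleting $v$; the deck $\mathscr{D}(G)$ is the multiset of all cards up to isomorphism. A class of graphs is recognizable if every reconstruction (graph with the same deck) of a member of the class is again a member. *)

theory Defs
  imports Main "HOL-Library.Multiset" "HOL-Library.Extended_Nat"
begin

type_synonym 'a sgraph = "'a set \<times> ('a \<Rightarrow> 'a \<Rightarrow> bool)"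

definition verts :: "'a sgraph \<Rightarrow> 'a set" where "verts G = fst G"
definition adj :: "'a sgraph \<Rightarrow> 'a \<Rightarrow> 'a \<Rightarrow> bool" where "adj G = snd G"

definition wf_graph :: "'a sgraph \<Rightarrow> bool" where
  "wf_graph G \<longleftrightarrow> finite (verts G)
     \<and> (\<forall>x y. adj G x y \<longrightarrow> x \<in> verts G \<and> y \<in> verts G)
     \<and> (\<forall>x y. adj G x y \<longrightarrow> adj G y x)
     \<and> (\<forall>x. \<not> adj G x x)"

definition complement :: "'a sgraph \<Rightarrow> 'a sgraph" where
  "complement G = (verts G,
     \<lambda>x y. x \<in> verts G \<and> y \<in> verts G \<and> x \<noteq> y \<and> \<not> adj G x y)"

definition gdist :: "'a sgraph \<Rightarrow> 'a \<Rightarrow> 'a \<Rightarrow> enat" where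
  "gdist G u v = (if \<exists>n. (adj G ^^ n) u v
                  then enat (LEAST n. (adj G ^^ n) u v) else \<infinity>)"

definition diam :: "'a sgraph \<Rightarrow> enat" where
  "diam G = (SUP p \<in> verts G \<times> verts G. gdist G (fst p) (snd p))"

definition dominating :: "'a sgraph \<Rightarrow> 'a set \<Rightarrow> bool" where
  "dominating G D \<longleftrightarrow> D \<subseteq> verts G \<and>
     (\<forall>v \<in> verts G. v \<in> D \<or> (\<exists>d \<in> D. adj G v d))"

definition domination_number :: "'a sgraph \<Rightarrow> nat" where
  "domination_number G = (LEAST k. \<exists>D. dominating G D \<and> card D = k)"

definition graph_iso :: "'a sgraph \<Rightarrow> 'b sgraph \<Rightarrow> bool" where
  "graph_iso G H \<longleftrightarrow> (\<exists>f. bij_betw f (verts G) (verts H) \<and>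
     (\<forall>x \<in> verts G. \<forall>y \<in> verts G. adj G x y \<longleftrightarrow> adj H (f x) (f y)))"

definition card_del :: "'a sgraph \<Rightarrow> 'a \<Rightarrow> 'a sgraph" where
  "card_del G v = (verts G - {v}, \<lambda>x y. adj G x y \<and> x \<noteq> v \<and> y \<noteq> v)"

definition iso_class :: "'a sgraph \<Rightarrow> 'a sgraph set" where
  "iso_class G = {K. wf_graph K \<and> graph_iso K G}"

definition deck :: "'a sgraph \<Rightarrow> 'a sgraph set multiset" where
  "deck G = image_mset (\<lambda>v. iso_class (card_del G v)) (mset_set (verts G))"

definition H3 :: "'a sgraph \<Rightarrow> bool" where
  "H3 G \<longleftrightarrow> wf_graph G \<and> card (verts G) \<ge> 12 \<and> domination_number G = 2
            \<and> diam (complement G) \<ge> 3"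

end

theory Submission
  imports Defs
begin

(* A graph G on n vertices lies in H3 iff n >= 12, no vertex has degree n - 1, and some edge ab
   dominates G; the last condition says that a and b are at distance at least 3 in the complement,
   and together with the second it forces gamma(G) = 2.  Kelly's counting recovers n, the number
   of edges and hence the degree of the vertex deleted from each card, which settles the first two
   conditions.  For the third, let N_k count the arcs ab leaving exactly k vertices undominated.
   Counting over all cards gives
     sum_v N_k(G - v) = (n - 2 - k) N_k(G) + (k + 1) N_(k+1)(G),
   so the deck determines N_k downward from k = n - 2, once N_(n-2), the number of arcs spanning a
   K2 component, is known.  A K2 component yields a leaf whose card has an isolated vertex; this
   property passes to G through a degree-matched card, and it is impossible in a graph with a
   dominating edge and n >= 3.  Hence N_(n-2) vanishes for G and every reconstruction H, and
   N_0(H) = N_0(G) > 0. *)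

definition neighbours :: "'a sgraph \<Rightarrow> 'a \<Rightarrow> 'a set" where
  "neighbours X v = {w \<in> verts X. adj X v w}"

definition degree :: "'a sgraph \<Rightarrow> 'a \<Rightarrow> nat" where
  "degree X v = card (neighbours X v)"

definition arcs :: "'a sgraph \<Rightarrow> ('a \<times> 'a) set" where
  "arcs X = {p \<in> verts X \<times> verts X. adj X (fst p) (snd p)}"

definition undominated :: "'a sgraph \<Rightarrow> 'a \<Rightarrow> 'a \<Rightarrow> 'a set" where
  "undominated X a b = {w \<in> verts X. w \<noteq> a \<and> w \<noteq> b \<and> \<not> adj X a w \<and> \<not> adj X b w}"

definition num_arcs_undominated :: "'a sgraph \<Rightarrow> nat \<Rightarrow> nat" where
  "num_arcs_undominated X k = card {p \<in> arcs X. card (undominated X (fst p) (snd p)) = k}"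

lemma verts_card_del [simp]: "verts (card_del X x) = verts X - {x}"
  by (simp add: card_del_def verts_def)

lemma adj_card_del [simp]: "adj (card_del X x) a b \<longleftrightarrow> adj X a b \<and> a \<noteq> x \<and> b \<noteq> x"
  by (simp add: card_del_def adj_def)

lemma verts_complement [simp]: "verts (complement X) = verts X"
  by (simp add: complement_def verts_def)

lemma adj_complement [simp]:
  "adj (complement X) a b \<longleftrightarrow> a \<in> verts X \<and> b \<in> verts X \<and> a \<noteq> b \<and> \<not> adj X a b"
  by (simp add: complement_def adj_def verts_def)

lemma wf_graph_card_del: "wf_graph X \<Longrightarrow> wf_graph (card_del X x)"
  unfolding wf_graph_def by auto

lemma wf_graphD:
  assumes "wf_graph X"
  shows "finite (verts X)" "adj X a b \<Longrightarrow> a \<in> verts X" "adj X a b \<Longrightarrow> b \<in> verts X"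
    "adj X a b \<Longrightarrow> adj X b a" "\<not> adj X a a"
  using assms unfolding wf_graph_def by auto

lemma finite_arcs: "wf_graph X \<Longrightarrow> finite (arcs X)"
  unfolding arcs_def by (simp add: wf_graphD(1))

lemma finite_undominated: "wf_graph X \<Longrightarrow> finite (undominated X a b)"
  unfolding undominated_def by (simp add: wf_graphD(1))

lemma undominated_subset: "undominated X a b \<subseteq> verts X - {a, b}"
  unfolding undominated_def by auto

lemma card_filter_eq_sum_if:
  "finite A \<Longrightarrow> card {x \<in> A. P x} = (\<Sum>x\<in>A. if P x then 1 else 0)"
  by (simp add: sum.inter_filter[symmetric])

lemma sum_card_filter_swap:
  assumes "finite A" "finite B"
  shows "(\<Sum>x\<in>A. card {y \<in> B. R x y}) = (\<Sum>y\<in>B. card {x \<in> A. R x y})"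
proof -
  have "(\<Sum>x\<in>A. card {y \<in> B. R x y}) = (\<Sum>x\<in>A. \<Sum>y\<in>B. if R x y then 1 else 0)"
    using assms(2) by (simp add: card_filter_eq_sum_if)
  also have "\<dots> = (\<Sum>y\<in>B. \<Sum>x\<in>A. if R x y then 1 else 0)"
    by (rule sum.swap)
  also have "\<dots> = (\<Sum>y\<in>B. card {x \<in> A. R x y})"
    using assms(1) by (simp add: card_filter_eq_sum_if)
  finally show ?thesis .
qed

lemma card_filter_card_Diff_singleton:
  assumes "finite S" "U \<subseteq> S"
  shows "card {x \<in> S. card (U - {x}) = k}
    = (if card U = k then card S - k else 0) + (if card U = Suc k then Suc k else 0)"
proof -
  have U: "finite U" using assms finite_subset by blast
  have pos: "card U \<noteq> 0" if "x \<in> U" for x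
    using that U by auto
  consider "card U = k" | "card U = Suc k" | "card U \<noteq> k" "card U \<noteq> Suc k"
    by blast
  then show ?thesis
  proof cases
    case 1
    then have "{x \<in> S. card (U - {x}) = k} = S - U"
      using assms(2) U by (auto simp: card_Diff_singleton_if dest: pos)
    then show ?thesis
      using 1 assms by (simp add: card_Diff_subset U)
  next
    case 2
    then have "{x \<in> S. card (U - {x}) = k} = U"
      using assms(2) U by (auto simp: card_Diff_singleton_if)
    then show ?thesis
      using 2 by simp
  next
    case 3
    then have empty: "{x \<in> S. card (U - {x}) = k} = {}"
      using U by (auto simp: card_Diff_singleton_if dest: pos)
    show ?thesis
      unfolding empty using 3 by simp
  qed
qed

lemma eq_by_downward_recurrence:
  fixes a b c d :: "nat \<Rightarrow> nat"
  assumes rec: "\<And>k. k < m \<Longrightarrow> c k * a k + d k * a (Suc k) = c k * b k + d k * b (Suc k)"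
    and c: "\<And>k. k < m \<Longrightarrow> c k \<noteq> 0"
    and top: "a m = b m"
    and "k \<le> m"
  shows "a k = b k"
  using \<open>k \<le> m\<close>
proof (induction rule: inc_induct)
  case base
  show ?case by (rule top)
next
  case (step n)
  then have "c n * a n = c n * b n"
    using rec[of n] by simp
  then show ?case
    using c[OF step.hyps(2)] by simp
qed

locale graph_isomorphism =
  fixes X :: "'a sgraph" and Y :: "'b sgraph" and f :: "'a \<Rightarrow> 'b"
  assumes bij: "bij_betw f (verts X) (verts Y)"
    and adj_iff: "x \<in> verts X \<Longrightarrow> y \<in> verts X \<Longrightarrow> adj Y (f x) (f y) \<longleftrightarrow> adj X x y"
begin

lemma eq_iff: "x \<in> verts X \<Longrightarrow> y \<in> verts X \<Longrightarrow> f x = f y \<longleftrightarrow> x = y"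
  using bij by (auto simp: bij_betw_def inj_on_def)

lemma degree_eq: "x \<in> verts X \<Longrightarrow> degree Y (f x) = degree X x"
  unfolding degree_def neighbours_def
  by (rule bij_betw_same_card[symmetric], rule bij_betw_Collect[OF bij]) (simp add: adj_iff)

lemma card_undominated_eq:
  "a \<in> verts X \<Longrightarrow> b \<in> verts X \<Longrightarrow> card (undominated Y (f a) (f b)) = card (undominated X a b)"
  unfolding undominated_def
  by (rule bij_betw_same_card[symmetric], rule bij_betw_Collect[OF bij]) (simp add: adj_iff eq_iff)

lemma bij_betw_arcs: "bij_betw (map_prod f f) (arcs X) (arcs Y)"
  unfolding arcs_def
  by (rule bij_betw_Collect[OF bij_betw_map_prod[OF bij bij]]) (auto simp: adj_iff)

lemma card_arcs_eq: "card (arcs Y) = card (arcs X)"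
  by (rule bij_betw_same_card[OF bij_betw_arcs, symmetric])

lemma num_arcs_undominated_eq: "num_arcs_undominated Y k = num_arcs_undominated X k"
  unfolding num_arcs_undominated_def
  by (rule bij_betw_same_card[symmetric], rule bij_betw_Collect[OF bij_betw_arcs])
    (auto simp: arcs_def card_undominated_eq)

end

lemma graph_iso_iff_isomorphism: "graph_iso X Y \<longleftrightarrow> (\<exists>f. graph_isomorphism X Y f)"
  unfolding graph_iso_def graph_isomorphism_def by metis

lemma graph_iso_refl: "graph_iso X X"
  unfolding graph_iso_def by (rule exI[of _ id]) simp

lemma graph_iso_card_arcs: "graph_iso X Y \<Longrightarrow> card (arcs X) = card (arcs Y)"
  using graph_isomorphism.card_arcs_eq graph_iso_iff_isomorphism by metis

lemma graph_iso_num_arcs_undominated: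
  "graph_iso X Y \<Longrightarrow> num_arcs_undominated X k = num_arcs_undominated Y k"
  using graph_isomorphism.num_arcs_undominated_eq graph_iso_iff_isomorphism by metis

lemma graph_iso_degree:
  assumes "graph_iso X Y" "x \<in> verts X"
  shows "\<exists>y \<in> verts Y. degree Y y = degree X x"
proof -
  obtain f where "graph_isomorphism X Y f"
    using assms(1) graph_iso_iff_isomorphism by blast
  then show ?thesis
    using assms(2) graph_isomorphism.degree_eq graph_isomorphism.bij bij_betwE by metis
qed

lemma neighbours_card_del: "v \<noteq> x \<Longrightarrow> neighbours (card_del X x) v = neighbours X v - {x}"
  unfolding neighbours_def by auto

lemma arcs_card_del: "arcs (card_del X x) = {p \<in> arcs X. fst p \<noteq> x \<and> snd p \<noteq> x}"
  unfolding arcs_def by auto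

lemma undominated_card_del:
  "a \<noteq> x \<Longrightarrow> b \<noteq> x \<Longrightarrow> undominated (card_del X x) a b = undominated X a b - {x}"
  unfolding undominated_def by auto

lemma card_arcs_card_del:
  assumes wf: "wf_graph X" and x: "x \<in> verts X"
  shows "card (arcs X) = card (arcs (card_del X x)) + 2 * degree X x"
proof -
  let ?star = "{x} \<times> neighbours X x \<union> neighbours X x \<times> {x}"
  have fin: "finite (neighbours X x)"
    using wf_graphD(1)[OF wf] by (simp add: neighbours_def)
  have "arcs X = arcs (card_del X x) \<union> ?star"
    using x wf_graphD[OF wf] by (auto simp: arcs_def neighbours_def)
  moreover have "arcs (card_del X x) \<inter> ?star = {}"
    by (auto simp: arcs_def neighbours_def)
  ultimately have "card (arcs X) = card (arcs (card_del X x)) + card ?star"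
    using fin finite_arcs[OF wf_graph_card_del[OF wf]] by (simp add: card_Un_disjoint)
  also have "card ?star = 2 * degree X x"
    using fin wf_graphD(5)[OF wf]
    by (subst card_Un_disjoint) (auto simp: card_cartesian_product degree_def neighbours_def)
  finally show ?thesis .
qed

lemma card_Diff_pair:
  assumes "finite V" "a \<in> V" "b \<in> V" "a \<noteq> b"
  shows "card (V - {a, b}) = card V - 2"
  using assms by (simp add: card_Diff_subset)

lemma sum_card_arcs_card_del:
  assumes wf: "wf_graph X"
  shows "(\<Sum>x\<in>verts X. card (arcs (card_del X x))) = (card (verts X) - 2) * card (arcs X)"
proof -
  have "(\<Sum>x\<in>verts X. card (arcs (card_del X x)))
      = (\<Sum>p\<in>arcs X. card {x \<in> verts X. fst p \<noteq> x \<and> snd p \<noteq> x})"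
    unfolding arcs_card_del
    by (rule sum_card_filter_swap[OF wf_graphD(1)[OF wf] finite_arcs[OF wf]])
  also have "\<dots> = (\<Sum>p\<in>arcs X. card (verts X) - 2)"
  proof (rule sum.cong[OF refl])
    fix p assume "p \<in> arcs X"
    then have "fst p \<in> verts X" "snd p \<in> verts X" "fst p \<noteq> snd p"
      using wf_graphD(5)[OF wf] by (auto simp: arcs_def)
    moreover have "{x \<in> verts X. fst p \<noteq> x \<and> snd p \<noteq> x} = verts X - {fst p, snd p}"
      by auto
    ultimately show "card {x \<in> verts X. fst p \<noteq> x \<and> snd p \<noteq> x} = card (verts X) - 2"
      using card_Diff_pair[OF wf_graphD(1)[OF wf]] by simp
  qed
  finally show ?thesis
    by simp
qed

lemma sum_num_arcs_undominated_card_del: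
  assumes wf: "wf_graph X"
  shows "(\<Sum>x\<in>verts X. num_arcs_undominated (card_del X x) k)
    = (card (verts X) - 2 - k) * num_arcs_undominated X k
      + Suc k * num_arcs_undominated X (Suc k)"
proof -
  let ?U = "\<lambda>p. undominated X (fst p) (snd p)"
  have fin: "finite (verts X)" "finite (arcs X)"
    using wf by (simp_all add: wf_graphD(1) finite_arcs)
  have "num_arcs_undominated (card_del X x) k
      = card {p \<in> arcs X. fst p \<noteq> x \<and> snd p \<noteq> x \<and> card (?U p - {x}) = k}" for x
    unfolding num_arcs_undominated_def arcs_card_del
    by (rule arg_cong[where f = card]) (auto simp: undominated_card_del)
  then have "(\<Sum>x\<in>verts X. num_arcs_undominated (card_del X x) k)
      = (\<Sum>p\<in>arcs X. card {x \<in> verts X. fst p \<noteq> x \<and> snd p \<noteq> x \<and> card (?U p - {x}) = k})"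
    using sum_card_filter_swap[OF fin] by simp
  also have "\<dots> = (\<Sum>p\<in>arcs X. (if card (?U p) = k then card (verts X) - 2 - k else 0)
      + (if card (?U p) = Suc k then Suc k else 0))"
  proof (rule sum.cong[OF refl])
    fix p assume "p \<in> arcs X"
    then have "fst p \<in> verts X" "snd p \<in> verts X" "fst p \<noteq> snd p"
      using wf_graphD(5)[OF wf] by (auto simp: arcs_def)
    then have card_pair: "card (verts X - {fst p, snd p}) = card (verts X) - 2"
      using card_Diff_pair[OF fin(1)] by simp
    have filter: "{x \<in> verts X. fst p \<noteq> x \<and> snd p \<noteq> x \<and> card (?U p - {x}) = k}
        = {x \<in> verts X - {fst p, snd p}. card (?U p - {x}) = k}"
      by auto
    show "card {x \<in> verts X. fst p \<noteq> x \<and> snd p \<noteq> x \<and> card (?U p - {x}) = k}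
        = (if card (?U p) = k then card (verts X) - 2 - k else 0)
          + (if card (?U p) = Suc k then Suc k else 0)"
      unfolding filter card_pair[symmetric]
      by (rule card_filter_card_Diff_singleton[OF _ undominated_subset]) (simp add: fin(1))
  qed
  also have "\<dots> = (card (verts X) - 2 - k) * num_arcs_undominated X k
      + Suc k * num_arcs_undominated X (Suc k)"
    unfolding num_arcs_undominated_def card_filter_eq_sum_if[OF fin(2)]
    by (auto simp: sum_distrib_left sum.distrib[symmetric] intro!: sum.cong)
  finally show ?thesis .
qed

lemma size_deck: "finite (verts X) \<Longrightarrow> size (deck X) = card (verts X)"
  unfolding deck_def by simp

lemma sum_cards_eq_sum_deck:
  assumes wf: "wf_graph X"
    and inv: "\<And>A B. wf_graph A \<Longrightarrow> wf_graph B \<Longrightarrow> graph_iso A B \<Longrightarrow> \<phi> A = \<phi> B"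
  shows "(\<Sum>x\<in>verts X. \<phi> (card_del X x))
    = sum_mset (image_mset (\<lambda>C. \<phi> (SOME K. K \<in> C)) (deck X))"
proof -
  have "\<phi> (SOME K. K \<in> iso_class C) = \<phi> C" if "wf_graph C" for C
  proof -
    have "C \<in> iso_class C"
      using that graph_iso_refl by (simp add: iso_class_def)
    then have "(SOME K. K \<in> iso_class C) \<in> iso_class C"
      by (rule someI)
    then show ?thesis
      using that inv by (simp add: iso_class_def)
  qed
  then have "(\<Sum>x\<in>verts X. \<phi> (card_del X x))
      = (\<Sum>x\<in>verts X. \<phi> (SOME K. K \<in> iso_class (card_del X x)))"
    using wf_graph_card_del[OF wf] by simp
  then show ?thesis
    unfolding deck_def sum_unfold_sum_mset image_mset.compositionality by (simp add: comp_def)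
qed

lemma sum_cards_eq_if_deck_eq:
  assumes "wf_graph G" "wf_graph H" "deck H = deck G"
    and "\<And>A B. wf_graph A \<Longrightarrow> wf_graph B \<Longrightarrow> graph_iso A B \<Longrightarrow> \<phi> A = \<phi> B"
  shows "(\<Sum>x\<in>verts H. \<phi> (card_del H x)) = (\<Sum>x\<in>verts G. \<phi> (card_del G x))"
  using sum_cards_eq_sum_deck[of H \<phi>] sum_cards_eq_sum_deck[of G \<phi>] assms by simp

lemma deck_eq_card_iso:
  assumes wf: "wf_graph G" "wf_graph H" and deck: "deck H = deck G" and x: "x \<in> verts H"
  shows "\<exists>w \<in> verts G. graph_iso (card_del H x) (card_del G w)"
proof -
  have "iso_class (card_del H x) \<in># deck H"
    using x wf_graphD(1)[OF wf(2)] by (simp add: deck_def)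
  then have "iso_class (card_del H x) \<in># deck G"
    by (simp only: deck)
  then obtain w where w: "w \<in> verts G" "iso_class (card_del H x) = iso_class (card_del G w)"
    using wf_graphD(1)[OF wf(1)] unfolding deck_def by auto
  have "card_del H x \<in> iso_class (card_del H x)"
    using wf_graph_card_del[OF wf(2)] graph_iso_refl by (simp add: iso_class_def)
  then show ?thesis
    using w unfolding iso_class_def by blast
qed

lemma card_verts_eq_if_deck_eq:
  "wf_graph G \<Longrightarrow> wf_graph H \<Longrightarrow> deck H = deck G \<Longrightarrow> card (verts H) = card (verts G)"
  using size_deck wf_graphD(1) by metis

lemma card_arcs_eq_if_deck_eq:
  assumes wf: "wf_graph G" "wf_graph H" and deck: "deck H = deck G"
    and n: "3 \<le> card (verts G)"
  shows "card (arcs H) = card (arcs G)"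
proof -
  have "(\<Sum>x\<in>verts H. card (arcs (card_del H x))) = (\<Sum>x\<in>verts G. card (arcs (card_del G x)))"
    by (rule sum_cards_eq_if_deck_eq[OF wf deck]) (rule graph_iso_card_arcs)
  then have "(card (verts G) - 2) * card (arcs H) = (card (verts G) - 2) * card (arcs G)"
    using sum_card_arcs_card_del[OF wf(1)] sum_card_arcs_card_del[OF wf(2)]
      card_verts_eq_if_deck_eq[OF wf deck] by simp
  then show ?thesis
    using n by simp
qed

lemma deck_eq_card_iso_degree:
  assumes wf: "wf_graph G" "wf_graph H" and deck: "deck H = deck G"
    and n: "3 \<le> card (verts G)" and x: "x \<in> verts H"
  shows "\<exists>w \<in> verts G. graph_iso (card_del H x) (card_del G w) \<and> degree G w = degree H x"
proof -
  obtain w where w: "w \<in> verts G" "graph_iso (card_del H x) (card_del G w)"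
    using deck_eq_card_iso[OF wf deck x] by blast
  have "card (arcs (card_del H x)) = card (arcs (card_del G w))"
    by (rule graph_iso_card_arcs[OF w(2)])
  then have "degree G w = degree H x"
    using card_arcs_card_del[OF wf(1) w(1)] card_arcs_card_del[OF wf(2) x]
      card_arcs_eq_if_deck_eq[OF wf deck n] by simp
  with w show ?thesis
    by blast
qed

lemma num_arcs_undominated_eq_if_deck_eq:
  assumes wf: "wf_graph G" "wf_graph H" and deck: "deck H = deck G"
    and top: "num_arcs_undominated H (card (verts G) - 2)
      = num_arcs_undominated G (card (verts G) - 2)"
    and k: "k \<le> card (verts G) - 2"
  shows "num_arcs_undominated H k = num_arcs_undominated G k"
proof (rule eq_by_downward_recurrence[where a = "num_arcs_undominated H"
      and b = "num_arcs_undominated G" and c = "\<lambda>j. card (verts G) - 2 - j" and d = Suc,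
      OF _ _ top k])
  fix j
  have "(\<Sum>x\<in>verts H. num_arcs_undominated (card_del H x) j)
      = (\<Sum>x\<in>verts G. num_arcs_undominated (card_del G x) j)"
    by (rule sum_cards_eq_if_deck_eq[OF wf deck]) (rule graph_iso_num_arcs_undominated)
  then show "(card (verts G) - 2 - j) * num_arcs_undominated H j
      + Suc j * num_arcs_undominated H (Suc j)
    = (card (verts G) - 2 - j) * num_arcs_undominated G j
      + Suc j * num_arcs_undominated G (Suc j)"
    using sum_num_arcs_undominated_card_del[OF wf(1)] sum_num_arcs_undominated_card_del[OF wf(2)]
      card_verts_eq_if_deck_eq[OF wf deck] by simp
qed simp

lemma undominated_iff_adj_complement:
  assumes wf: "wf_graph X" and "a \<in> verts X" "b \<in> verts X"
  shows "w \<in> undominated X a b \<longleftrightarrow> adj (complement X) a w \<and> adj (complement X) w b"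
  using assms wf_graphD(4)[OF wf] unfolding undominated_def adj_complement by blast

lemma relpowp_2_complement_iff:
  assumes "wf_graph X" "a \<in> verts X" "b \<in> verts X"
  shows "(adj (complement X) ^^ 2) a b \<longleftrightarrow> undominated X a b \<noteq> {}"
  using undominated_iff_adj_complement[OF assms] by (auto simp: numeral_2_eq_2 relcompp_apply)

lemma gdist_le: "(adj X ^^ n) a b \<Longrightarrow> gdist X a b \<le> enat n"
  unfolding gdist_def by (auto intro: Least_le)

lemma enat_le_gdist:
  assumes "\<And>m. m < n \<Longrightarrow> \<not> (adj X ^^ m) a b"
  shows "enat n \<le> gdist X a b"
proof (cases "\<exists>m. (adj X ^^ m) a b")
  case True
  then have "(adj X ^^ (LEAST m. (adj X ^^ m) a b)) a b"
    by (rule LeastI_ex)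
  then have "n \<le> (LEAST m. (adj X ^^ m) a b)"
    using assms not_less by blast
  then show ?thesis
    using True by (simp add: gdist_def)
qed (simp add: gdist_def)

lemma gdist_complement_ge_3:
  assumes wf: "wf_graph X" and ab: "adj X a b" "undominated X a b = {}"
  shows "3 \<le> gdist (complement X) a b"
proof -
  have V: "a \<in> verts X" "b \<in> verts X" "a \<noteq> b"
    using ab(1) wf_graphD[OF wf] by auto
  have no_short_walk: "\<not> (adj (complement X) ^^ m) a b" if "m < 3" for m
  proof -
    have "m = 0 \<or> m = 1 \<or> m = 2"
      using that by auto
    then show ?thesis
      using V ab relpowp_2_complement_iff[OF wf V(1,2)] by auto
  qed
  show ?thesis
    using enat_le_gdist[OF no_short_walk] by (simp add: numeral_eq_enat)
qed

lemma gdist_complement_le_2: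
  assumes wf: "wf_graph X" and V: "a \<in> verts X" "b \<in> verts X"
    and "\<not> (adj X a b \<and> undominated X a b = {})"
  shows "gdist (complement X) a b \<le> 2"
proof -
  have "\<exists>m \<le> 2. (adj (complement X) ^^ m) a b"
  proof (cases "a = b \<or> \<not> adj X a b")
    case True
    then show ?thesis
      using V by (intro exI[of _ "if a = b then 0 else 1"]) auto
  next
    case False
    then have "(adj (complement X) ^^ 2) a b"
      using assms(4) relpowp_2_complement_iff[OF wf V] by blast
    then show ?thesis
      by blast
  qed
  then obtain m where m: "m \<le> 2" "(adj (complement X) ^^ m) a b"
    by blast
  have "gdist (complement X) a b \<le> enat m"
    by (rule gdist_le[OF m(2)])
  also have "\<dots> \<le> 2"
    using m(1) by (simp add: numeral_eq_enat)
  finally show ?thesis .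
qed

lemma diam_complement_ge_3_iff:
  assumes wf: "wf_graph X"
  shows "3 \<le> diam (complement X) \<longleftrightarrow> (\<exists>a b. adj X a b \<and> undominated X a b = {})"
proof
  assume "3 \<le> diam (complement X)"
  show "\<exists>a b. adj X a b \<and> undominated X a b = {}"
  proof (rule ccontr)
    assume no_arc: "\<not> (\<exists>a b. adj X a b \<and> undominated X a b = {})"
    have "diam (complement X) \<le> 2"
      unfolding diam_def
    proof (rule SUP_least)
      fix p assume "p \<in> verts (complement X) \<times> verts (complement X)"
      then show "gdist (complement X) (fst p) (snd p) \<le> 2"
        using gdist_complement_le_2[OF wf] no_arc by (simp add: mem_Times_iff)
    qed
    with \<open>3 \<le> diam (complement X)\<close> have "(3::enat) \<le> 2"
      by (rule order_trans)
    then show False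
      by simp
  qed
next
  assume "\<exists>a b. adj X a b \<and> undominated X a b = {}"
  then obtain a b where ab: "adj X a b" "undominated X a b = {}"
    by blast
  have "gdist (complement X) a b \<le> diam (complement X)"
    unfolding diam_def using ab(1) wf_graphD(2,3)[OF wf] by (intro SUP_upper2[of "(a, b)"]) simp_all
  then show "3 \<le> diam (complement X)"
    using gdist_complement_ge_3[OF wf ab] by (rule order_trans[rotated])
qed

lemma dominating_singleton_iff:
  assumes wf: "wf_graph X"
  shows "dominating X {d} \<longleftrightarrow> d \<in> verts X \<and> degree X d = card (verts X) - 1"
proof (cases "d \<in> verts X")
  case True
  have sub: "neighbours X d \<subseteq> verts X - {d}"
    using wf_graphD(5)[OF wf] by (auto simp: neighbours_def)
  have fin: "finite (verts X - {d})"
    using wf_graphD(1)[OF wf] by blast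
  have "dominating X {d} \<longleftrightarrow> verts X - {d} \<subseteq> neighbours X d"
    using True wf_graphD(4)[OF wf] unfolding dominating_def neighbours_def by blast
  also have "\<dots> \<longleftrightarrow> card (neighbours X d) = card (verts X - {d})"
    using card_subset_eq[OF fin sub] sub by auto
  also have "card (verts X - {d}) = card (verts X) - 1"
    using True by simp
  finally show ?thesis
    using True by (simp add: degree_def)
qed (simp add: dominating_def)

lemma dominating_pair_iff_undominated:
  assumes wf: "wf_graph X" and "a \<in> verts X" "b \<in> verts X"
  shows "dominating X {a, b} \<longleftrightarrow> undominated X a b = {}"
  using assms wf_graphD(4)[OF wf] unfolding dominating_def undominated_def by blast

lemma domination_number_le_card: "dominating X D \<Longrightarrow> domination_number X \<le> card D"
  unfolding domination_number_def by (rule Least_le) blast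

lemma domination_number_eq_2I:
  assumes fin: "finite (verts X)" and pair: "dominating X {a, b}" "a \<noteq> b"
    and no_single: "\<And>d. \<not> dominating X {d}"
  shows "domination_number X = 2"
proof -
  have "\<exists>D. dominating X D \<and> card D = domination_number X"
    unfolding domination_number_def by (rule LeastI_ex) (use pair(1) in blast)
  then obtain D where D: "dominating X D" "card D = domination_number X"
    by blast
  have "D \<noteq> {}"
    using pair(1) D(1) unfolding dominating_def by blast
  moreover have "finite D"
    using D(1) fin finite_subset unfolding dominating_def by blast
  ultimately have "card D \<noteq> 0"
    by simp
  moreover have "card D \<noteq> 1"
  proof
    assume "card D = 1"
    then obtain d where "D = {d}"
      by (rule card_1_singletonE)
    then show False
      using D(1) no_single by simp
  qed
  moreover have "domination_number X \<le> 2"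
    using domination_number_le_card[OF pair(1)] pair(2) by simp
  ultimately show ?thesis
    using D(2) by arith
qed

lemma num_arcs_undominated_0_pos_iff:
  assumes wf: "wf_graph X"
  shows "0 < num_arcs_undominated X 0 \<longleftrightarrow> (\<exists>a b. adj X a b \<and> undominated X a b = {})"
proof -
  have zero: "{p \<in> arcs X. card (undominated X (fst p) (snd p)) = 0}
      = {p \<in> arcs X. undominated X (fst p) (snd p) = {}}"
    using finite_undominated[OF wf] by auto
  have "finite {p \<in> arcs X. undominated X (fst p) (snd p) = {}}"
    using finite_arcs[OF wf] by simp
  then show ?thesis
    unfolding num_arcs_undominated_def zero card_gt_0_iff
    using wf_graphD(2,3)[OF wf] by (auto simp: arcs_def)
qed

lemma H3_iff:
  "H3 X \<longleftrightarrow> wf_graph X \<and> 12 \<le> card (verts X)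
    \<and> (\<forall>v \<in> verts X. degree X v \<noteq> card (verts X) - 1) \<and> 0 < num_arcs_undominated X 0"
proof (cases "wf_graph X")
  case wf: True
  have no_single: "(\<forall>d. \<not> dominating X {d}) \<longleftrightarrow> (\<forall>v \<in> verts X. degree X v \<noteq> card (verts X) - 1)"
    using dominating_singleton_iff[OF wf] by blast
  have "domination_number X = 2 \<Longrightarrow> \<not> dominating X {d}" for d
    using domination_number_le_card[of X "{d}"] by fastforce
  moreover have "domination_number X = 2"
    if "\<forall>d. \<not> dominating X {d}" "adj X a b" "undominated X a b = {}" for a b
  proof (rule domination_number_eq_2I[OF wf_graphD(1)[OF wf]])
    show "dominating X {a, b}"
      using that(2,3) wf_graphD(2,3)[OF wf] dominating_pair_iff_undominated[OF wf] by blast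
    show "a \<noteq> b"
      using that(2) wf_graphD(5)[OF wf] by blast
  qed (use that(1) in blast)
  ultimately show ?thesis
    unfolding H3_def no_single[symmetric] num_arcs_undominated_0_pos_iff[OF wf]
      diam_complement_ge_3_iff[OF wf] by blast
qed (simp add: H3_def)

lemma leaf_card_isolated_if_num_arcs_undominated_top:
  assumes wf: "wf_graph X" and "num_arcs_undominated X (card (verts X) - 2) \<noteq> 0"
  shows "\<exists>w \<in> verts X. degree X w = 1 \<and> (\<exists>b \<in> verts X - {w}. degree (card_del X w) b = 0)"
proof -
  have "{p \<in> arcs X. card (undominated X (fst p) (snd p)) = card (verts X) - 2} \<noteq> {}"
    using assms(2) unfolding num_arcs_undominated_def by (intro notI) simp
  then obtain a b where ab: "adj X a b" "card (undominated X a b) = card (verts X) - 2"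
    unfolding arcs_def by auto
  have V: "a \<in> verts X" "b \<in> verts X" "a \<noteq> b"
    using ab(1) wf_graphD[OF wf] by auto
  have U: "undominated X a b = verts X - {a, b}"
    by (rule card_subset_eq[OF _ undominated_subset])
      (simp_all add: wf_graphD(1)[OF wf] ab(2) card_Diff_pair[OF wf_graphD(1)[OF wf] V])
  have only: "y \<in> {a, b}" if "adj X a y \<or> adj X b y" for y
  proof (rule ccontr)
    assume "y \<notin> {a, b}"
    moreover have "y \<in> verts X"
      using that wf_graphD(3)[OF wf] by blast
    ultimately have "y \<in> undominated X a b"
      unfolding U by blast
    with that show False
      unfolding undominated_def by blast
  qed
  have Na: "neighbours X a = {b}" and Nb: "neighbours X b - {a} = {}"
    using only ab(1) V wf_graphD(5)[OF wf] unfolding neighbours_def by auto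
  then have "degree X a = 1" "degree (card_del X a) b = 0"
    unfolding degree_def neighbours_card_del[OF V(3)[symmetric]] Na Nb by simp_all
  then show ?thesis
    using V by blast
qed

lemma leaf_card_no_isolated_vertex:
  assumes wf: "wf_graph X" and uv: "adj X u v" "undominated X u v = {}"
    and n: "3 \<le> card (verts X)"
    and w: "w \<in> verts X" "degree X w = 1" and b: "b \<in> verts X - {w}"
  shows "degree (card_del X w) b \<noteq> 0"
proof
  assume isolated: "degree (card_del X w) b = 0"
  have Nb: "y = w" if "adj X b y" for y
  proof (rule ccontr)
    assume "y \<noteq> w"
    then have "y \<in> neighbours (card_del X w) b"
      using that b wf_graphD(3)[OF wf] by (simp add: neighbours_def)
    moreover have "finite (neighbours (card_del X w) b)"
      using wf_graphD(1)[OF wf] by (simp add: neighbours_def)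
    ultimately show False
      using isolated by (auto simp: degree_def)
  qed
  obtain c where "neighbours X w = {c}"
    using w(2) unfolding degree_def by (rule card_1_singletonE)
  then have Nw: "y = c" if "adj X w y" for y
    using that wf_graphD(3)[OF wf] unfolding neighbours_def by blast
  have sym: "adj X y z \<Longrightarrow> adj X z y" for y z
    using wf_graphD(4)[OF wf] by blast
  have dom: "adj X y u \<or> adj X y v" if "y \<in> verts X" "y \<noteq> u" "y \<noteq> v" for y
    using that uv(2) sym unfolding undominated_def by blast
  show False
  proof (cases "b = u \<or> b = v")
    case True
    have V: "u \<in> verts X" "v \<in> verts X" "u \<noteq> v"
      using uv(1) wf_graphD[OF wf] by auto
    then have "card (verts X - {u, v}) \<noteq> 0"
      using card_Diff_pair[OF wf_graphD(1)[OF wf]] n by simp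
    then obtain y where y: "y \<in> verts X" "y \<noteq> u" "y \<noteq> v"
      by (metis DiffE all_not_in_conv card.empty insertCI)
    (* The partner of b on the edge uv is w; a third vertex y can then only be dominated
       through w, which forces y = c = b. *)
    have "w = u \<or> w = v"
      using True uv(1) sym Nb by blast
    then show False
      using dom[OF y] True Nb Nw sym y(2,3) uv(1) b by metis
  next
    case False
    (* b is dominated through w, so w is an endpoint of uv and its unique neighbour c is
       both b and the other endpoint. *)
    then show False
      using b dom[of b] uv(1) Nb Nw sym by blast
  qed
qed

lemma num_arcs_undominated_top_eq_0:
  assumes wf: "wf_graph G" "wf_graph H" and deck: "deck H = deck G"
    and n: "3 \<le> card (verts G)"
    and uv: "adj G u v" "undominated G u v = {}"
  shows "num_arcs_undominated H (card (verts H) - 2) = 0"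
proof (rule ccontr)
  assume "num_arcs_undominated H (card (verts H) - 2) \<noteq> 0"
  then obtain x b where x: "x \<in> verts H" "degree H x = 1"
    and b: "b \<in> verts H - {x}" "degree (card_del H x) b = 0"
    using leaf_card_isolated_if_num_arcs_undominated_top[OF wf(2)] by blast
  obtain w where w: "w \<in> verts G" "graph_iso (card_del H x) (card_del G w)" "degree G w = 1"
    using deck_eq_card_iso_degree[OF wf deck n x(1)] x(2) by auto
  obtain b' where "b' \<in> verts G - {w}" "degree (card_del G w) b' = 0"
    using graph_iso_degree[OF w(2)] b by fastforce
  then show False
    using leaf_card_no_isolated_vertex[OF wf(1) uv n w(1,3)] by blast
qed

theorem lemma11:
  fixes G H :: "'a sgraph"
  assumes "H3 G"
    and "wf_graph H"
    and "deck H = deck G"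
  shows "H3 H"
proof -
  have wfG: "wf_graph G" and n: "12 \<le> card (verts G)"
    and no_universal: "\<forall>v \<in> verts G. degree G v \<noteq> card (verts G) - 1"
    and dominating_arc: "0 < num_arcs_undominated G 0"
    using assms(1) unfolding H3_iff by auto
  note wf = wfG assms(2) and deck = assms(3)
  obtain u v where uv: "adj G u v" "undominated G u v = {}"
    using dominating_arc num_arcs_undominated_0_pos_iff[OF wfG] by blast
  have card_H: "card (verts H) = card (verts G)"
    by (rule card_verts_eq_if_deck_eq[OF wf deck])
  have "\<forall>x \<in> verts H. degree H x \<noteq> card (verts H) - 1"
    using deck_eq_card_iso_degree[OF wf deck] no_universal n card_H by fastforce
  moreover have "num_arcs_undominated H 0 = num_arcs_undominated G 0"
  proof (rule num_arcs_undominated_eq_if_deck_eq[OF wf deck _ le0])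
    show "num_arcs_undominated H (card (verts G) - 2) = num_arcs_undominated G (card (verts G) - 2)"
      using num_arcs_undominated_top_eq_0[OF wf deck _ uv]
        num_arcs_undominated_top_eq_0[OF wfG wfG refl _ uv] n card_H by simp
  qed
  ultimately show ?thesis
    unfolding H3_iff using assms(2) n card_H dominating_arc by simp
qed

end
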